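(* If $G$ is a simple graph with no $K_5$-minor, then $G$ is $(4,1)$-choosable.
   Context: A $(k,d)$-list assignment for a graph $G$ assigns to each vertex $v$ a list $L(v)$ of at least $k$ colors such that $|L(x)\cap L(y)|\le d$ whenever $x$ and $y$ are adjacent. $G$ is $(k,d)$-choosable if for every $(k,d)$-list assignment $L$ there is a proper vertex coloring $\varphi$ of $G$ with $\varphi(v)\in L(v)$ for all $v$. *)

theory Defs
  imports Main
begin

definition simple_graph :: "'a set \<Rightarrow> ('a \<Rightarrow> 'a \<Rightarrow> bool) \<Rightarrow> bool" where
  "simple_graph V E \<longleftrightarrow> finite V \<and> (\<forall>x y. E x y \<longrightarrow> x \<in> V \<and> y \<in> V)
     \<and> (\<forall>x y. E x y \<longrightarrow> E y x) \<and> (\<forall>x. \<not> E x x)"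

definition connected_set :: "('a \<Rightarrow> 'a \<Rightarrow> bool) \<Rightarrow> 'a set \<Rightarrow> bool" where
  "connected_set E S \<longleftrightarrow>
     (\<forall>x\<in>S. \<forall>y\<in>S. (\<lambda>u v. E u v \<and> u \<in> S \<and> v \<in> S)\<^sup>*\<^sup>* x y)"

text \<open>G has a K_n minor iff there are n pairwise disjoint nonempty connected
branch sets, any two of which are joined by an edge.\<close>

definition has_complete_minor :: "'a set \<Rightarrow> ('a \<Rightarrow> 'a \<Rightarrow> bool) \<Rightarrow> nat \<Rightarrow> bool" where
  "has_complete_minor V E n \<longleftrightarrow>
     (\<exists>B :: nat \<Rightarrow> 'a set.
        (\<forall>i<n. B i \<noteq> {} \<and> B i \<subseteq> V \<and> connected_set E (B i)) \<and>
        (\<forall>i<n. \<forall>j<n. i \<noteq> j \<longrightarrow> B i \<inter> B j = {} \<and> (\<exists>x\<in>B i. \<exists>y\<in>B j. E x y)))"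

definition kd_list_assignment ::
  "'a set \<Rightarrow> ('a \<Rightarrow> 'a \<Rightarrow> bool) \<Rightarrow> nat \<Rightarrow> nat \<Rightarrow> ('a \<Rightarrow> 'c set) \<Rightarrow> bool" where
  "kd_list_assignment V E k d L \<longleftrightarrow>
     (\<forall>v\<in>V. finite (L v) \<and> k \<le> card (L v)) \<and>
     (\<forall>x\<in>V. \<forall>y\<in>V. E x y \<longrightarrow> card (L x \<inter> L y) \<le> d)"

definition proper_L_colouring ::
  "'a set \<Rightarrow> ('a \<Rightarrow> 'a \<Rightarrow> bool) \<Rightarrow> ('a \<Rightarrow> 'c set) \<Rightarrow> ('a \<Rightarrow> 'c) \<Rightarrow> bool" where
  "proper_L_colouring V E L \<phi> \<longleftrightarrow>
     (\<forall>v\<in>V. \<phi> v \<in> L v) \<and> (\<forall>x\<in>V. \<forall>y\<in>V. E x y \<longrightarrow> \<phi> x \<noteq> \<phi> y)"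

definition kd_choosable ::
  "'a set \<Rightarrow> ('a \<Rightarrow> 'a \<Rightarrow> bool) \<Rightarrow> nat \<Rightarrow> nat \<Rightarrow> 'c itself \<Rightarrow> bool" where
  "kd_choosable V E k d (_ :: 'c itself) \<longleftrightarrow>
     (\<forall>L :: 'a \<Rightarrow> 'c set. kd_list_assignment V E k d L \<longrightarrow>
        (\<exists>\<phi>. proper_L_colouring V E L \<phi>))"

end

theory Submission
  imports Defs "HOL-Library.Transitive_Closure_Table"
begin

(*
  A graph on n >= 3 vertices without a K5 minor has at most 3n - 6 edges. More generally, for
  t <= 3 a graph without a K_(t+2) minor has at most t n - t(t+1)/2 edges; this is proved by
  induction on t. A minimal counterexample has minimum degree > t (delete a vertex) and every
  edge lies in at least t triangles (contract it), so the neighbourhood of a vertex of at most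
  average degree spans a graph without a K_(t+1) minor in which every vertex has degree >= t;
  for t <= 3 this contradicts the bound for t - 1.

  Every subgraph of G therefore has at most three times as many edges as vertices, and by
  Hakimi's theorem G has an orientation with all out-degrees at most 3. Let each vertex v take a
  colour of L(v) outside the sets L(v) Int L(w) for its out-neighbours w, which contain at most
  3 colours in total. For an arc from v to w the colour of v then lies outside L(w), whereas the
  colour of w lies in L(w).
*)

section \<open>Graphs, induced subgraphs and edge contraction\<close>

text \<open>Ordered pairs, so every edge of the subgraph induced by \<open>S\<close> is counted twice.\<close>

definition arcs :: "'a set \<Rightarrow> ('a \<Rightarrow> 'a \<Rightarrow> bool) \<Rightarrow> ('a \<times> 'a) set" where
  "arcs S E = {(a, b). a \<in> S \<and> b \<in> S \<and> E a b}"

definition neighbours :: "'a set \<Rightarrow> ('a \<Rightarrow> 'a \<Rightarrow> bool) \<Rightarrow> 'a \<Rightarrow> 'a set" where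
  "neighbours V E v = {w \<in> V. E v w}"

definition induced :: "('a \<Rightarrow> 'a \<Rightarrow> bool) \<Rightarrow> 'a set \<Rightarrow> 'a \<Rightarrow> 'a \<Rightarrow> bool" where
  "induced E S = (\<lambda>u v. E u v \<and> u \<in> S \<and> v \<in> S)"

definition delete_edge :: "('a \<Rightarrow> 'a \<Rightarrow> bool) \<Rightarrow> 'a \<Rightarrow> 'a \<Rightarrow> 'a \<Rightarrow> 'a \<Rightarrow> bool" where
  "delete_edge E x y = (\<lambda>u v. E u v \<and> (u, v) \<noteq> (x, y) \<and> (u, v) \<noteq> (y, x))"

definition contract_edge :: "'a set \<Rightarrow> ('a \<Rightarrow> 'a \<Rightarrow> bool) \<Rightarrow> 'a \<Rightarrow> 'a \<Rightarrow> 'a \<Rightarrow> 'a \<Rightarrow> bool" where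
  "contract_edge V E x y = (\<lambda>u v. u \<in> V - {y} \<and> v \<in> V - {y} \<and> u \<noteq> v \<and>
     (E u v \<or> (u = x \<and> E y v) \<or> (v = x \<and> E u y)))"

lemma simple_graphD:
  assumes "simple_graph V E"
  shows "finite V" and "E u v \<Longrightarrow> u \<in> V" and "E u v \<Longrightarrow> v \<in> V"
    and "E u v \<Longrightarrow> E v u" and "\<not> E u u"
  using assms by (auto simp: simple_graph_def)

lemma connected_set_iff_induced:
  "connected_set E S \<longleftrightarrow> (\<forall>x\<in>S. \<forall>y\<in>S. (induced E S)\<^sup>*\<^sup>* x y)"
  by (simp add: connected_set_def induced_def)

lemma finite_arcs: "simple_graph V E \<Longrightarrow> finite (arcs S E)"
  unfolding arcs_def
  by (rule finite_subset[of _ "V \<times> V"]) (auto dest: simple_graphD(1-3))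

lemma finite_neighbours: "simple_graph V E \<Longrightarrow> finite (neighbours V E v)"
  unfolding neighbours_def by (auto dest: simple_graphD(1))

lemma card_arcs_eq_sum_degrees:
  assumes "simple_graph V E"
  shows "card (arcs V E) = (\<Sum>v\<in>V. card (neighbours V E v))"
proof -
  have "arcs V E = Sigma V (neighbours V E)"
    unfolding arcs_def neighbours_def by auto
  then show ?thesis
    using simple_graphD(1)[OF assms] finite_neighbours[OF assms] by simp
qed

lemma card_arcs_le_square:
  assumes "simple_graph V E"
  shows "card (arcs V E) \<le> card V * (card V - 1)"
proof -
  have "card (neighbours V E v) \<le> card (V - {v})" if "v \<in> V" for v
    using simple_graphD[OF assms] by (intro card_mono) (auto simp: neighbours_def)
  then have "(\<Sum>v\<in>V. card (neighbours V E v)) \<le> (\<Sum>v\<in>V. card V - 1)"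
    by (intro sum_mono) simp
  then show ?thesis
    using card_arcs_eq_sum_degrees[OF assms] by simp
qed

lemma exists_degree_le_average:
  assumes "simple_graph V E" and "V \<noteq> {}"
  shows "\<exists>x\<in>V. card (neighbours V E x) * card V \<le> card (arcs V E)"
proof -
  obtain x where "x \<in> V" and min: "\<forall>v\<in>V. card (neighbours V E x) \<le> card (neighbours V E v)"
    using assms(2) ex_has_least_nat[of "\<lambda>v. v \<in> V" _ "\<lambda>v. card (neighbours V E v)"] by blast
  then have "(\<Sum>v\<in>V. card (neighbours V E x)) \<le> (\<Sum>v\<in>V. card (neighbours V E v))"
    by (intro sum_mono) simp
  then show ?thesis
    using \<open>x \<in> V\<close> card_arcs_eq_sum_degrees[OF assms(1)] by (auto simp: mult.commute)
qed

lemma simple_graph_induced: "simple_graph V E \<Longrightarrow> S \<subseteq> V \<Longrightarrow> simple_graph S (induced E S)"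
  unfolding simple_graph_def induced_def by (auto intro: finite_subset)

lemma arcs_induced: "arcs S (induced E S) = arcs S E"
  unfolding arcs_def induced_def by auto

lemma neighbours_induced:
  "S \<subseteq> V \<Longrightarrow> neighbours S (induced E S) v = (if v \<in> S then S \<inter> neighbours V E v else {})"
  unfolding neighbours_def induced_def by auto

lemma simple_graph_delete_edge: "simple_graph V E \<Longrightarrow> simple_graph V (delete_edge E x y)"
  unfolding simple_graph_def delete_edge_def by auto

lemma card_arcs_delete_edge:
  assumes G: "simple_graph V E" and "E x y"
  shows "card (arcs V (delete_edge E x y)) + 2 = card (arcs V E)"
proof -
  have xy: "{(x, y), (y, x)} \<subseteq> arcs V E" and "x \<noteq> y"
    using simple_graphD[OF G] \<open>E x y\<close> by (auto simp: arcs_def)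
  have "arcs V (delete_edge E x y) = arcs V E - {(x, y), (y, x)}"
    unfolding arcs_def delete_edge_def by auto
  moreover have "card (arcs V E - {(x, y), (y, x)}) + 2 = card (arcs V E)"
    using card_Diff_subset[OF _ xy] card_mono[OF finite_arcs[OF G] xy] \<open>x \<noteq> y\<close> by simp
  ultimately show ?thesis by simp
qed

lemma card_arcs_delete_vertex:
  assumes G: "simple_graph V E"
  shows "card (arcs V E) \<le> card (arcs (V - {x}) E) + 2 * card (neighbours V E x)"
proof -
  let ?N = "neighbours V E x"
  have "arcs V E \<subseteq> arcs (V - {x}) E \<union> ({x} \<times> ?N \<union> ?N \<times> {x})"
    using simple_graphD(4)[OF G] unfolding arcs_def neighbours_def by auto
  then have "card (arcs V E) \<le> card (arcs (V - {x}) E \<union> ({x} \<times> ?N \<union> ?N \<times> {x}))"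
    using finite_arcs[OF G] finite_neighbours[OF G] by (intro card_mono) auto
  also have "\<dots> \<le> card (arcs (V - {x}) E) + card ({x} \<times> ?N \<union> ?N \<times> {x})"
    by (rule card_Un_le)
  also have "card ({x} \<times> ?N \<union> ?N \<times> {x}) \<le> card ({x} \<times> ?N) + card (?N \<times> {x})"
    by (rule card_Un_le)
  finally show ?thesis by (simp add: card_cartesian_product)
qed

lemma simple_graph_contract_edge:
  "simple_graph V E \<Longrightarrow> simple_graph (V - {y}) (contract_edge V E x y)"
  unfolding simple_graph_def contract_edge_def by auto

lemma card_arcs_contract_edge:
  assumes G: "simple_graph V E" and "E x y"
  shows "card (arcs V E)
    \<le> card (arcs (V - {y}) (contract_edge V E x y)) + 2 + 2 * card (neighbours V E x \<inter> neighbours V E y)"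
proof -
  note G' = simple_graphD[OF G]
  have "x \<noteq> y" "x \<in> V" using G' \<open>E x y\<close> by auto
  let ?Nx = "neighbours V E x" and ?Ny = "neighbours V E y"
  \<comment> \<open>The arcs of \<open>G - y\<close> survive, and \<open>x\<close> gains the neighbours \<open>Y\<close> of \<open>y\<close> it did not have.\<close>
  define Y where "Y = ?Ny - ?Nx - {x}"
  define X where "X = {x} \<times> Y \<union> Y \<times> {x}"
  have "finite Y" unfolding Y_def using finite_neighbours[OF G] by auto
  have "x \<notin> Y" unfolding Y_def by auto
  have card_X: "card X = 2 * card Y"
  proof -
    have "card X = card ({x} \<times> Y) + card (Y \<times> {x})"
      unfolding X_def using \<open>finite Y\<close> \<open>x \<notin> Y\<close> by (intro card_Un_disjoint) auto
    then show ?thesis by (simp add: card_cartesian_product)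
  qed
  have "arcs (V - {y}) E \<union> X \<subseteq> arcs (V - {y}) (contract_edge V E x y)"
    using G' \<open>x \<in> V\<close> \<open>x \<noteq> y\<close>
    unfolding X_def Y_def arcs_def contract_edge_def neighbours_def by auto
  moreover have "arcs (V - {y}) E \<inter> X = {}"
    using G' unfolding X_def Y_def arcs_def neighbours_def by auto
  ultimately have "card (arcs (V - {y}) E) + card X \<le> card (arcs (V - {y}) (contract_edge V E x y))"
    using finite_arcs[OF G] finite_arcs[OF simple_graph_contract_edge[OF G]] \<open>finite Y\<close>
    by (metis X_def card_Un_disjoint card_mono finite_Un finite_SigmaI finite.emptyI finite.insertI)
  moreover have "card ?Ny \<le> card Y + 1 + card (?Nx \<inter> ?Ny)"
  proof -
    have "card ?Ny \<le> card (Y \<union> {x} \<union> (?Nx \<inter> ?Ny))"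
      using \<open>finite Y\<close> finite_neighbours[OF G] by (intro card_mono) (auto simp: Y_def)
    also have "\<dots> \<le> card (Y \<union> {x}) + card (?Nx \<inter> ?Ny)"
      by (rule card_Un_le)
    also have "card (Y \<union> {x}) \<le> card Y + 1"
      using card_Un_le[of Y "{x}"] by simp
    finally show ?thesis by simp
  qed
  ultimately show ?thesis
    using card_arcs_delete_vertex[OF G, of y] card_X by linarith
qed

section \<open>Complete minors\<close>

lemma connected_set_mono:
  assumes "connected_set E' S" and "\<And>u v. E' u v \<Longrightarrow> u \<in> S \<Longrightarrow> v \<in> S \<Longrightarrow> E u v"
  shows "connected_set E S"
proof -
  have "(induced E' S)\<^sup>*\<^sup>* \<le> (induced E S)\<^sup>*\<^sup>*"
    using assms(2) by (intro rtranclp_mono) (auto simp: induced_def)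
  then show ?thesis
    using assms(1) by (auto simp: connected_set_iff_induced)
qed

lemma has_complete_minor_mono:
  assumes "has_complete_minor V' E' n" and "V' \<subseteq> V" and "\<And>u v. E' u v \<Longrightarrow> E u v"
  shows "has_complete_minor V E n"
  using assms connected_set_mono[of E' _ E] unfolding has_complete_minor_def by (smt (verit) subset_trans)

lemma has_complete_minor_2:
  assumes "simple_graph V E" and "E x y"
  shows "has_complete_minor V E 2"
  unfolding has_complete_minor_def
proof (intro exI[of _ "\<lambda>i. if i = 0 then {x} else {y}"] conjI allI impI)
  show "(if i = 0 then {x} else {y}) \<subseteq> V" for i
    using simple_graphD[OF assms(1)] assms(2) by auto
  show "connected_set E (if i = 0 then {x} else {y})" for i
    by (simp add: connected_set_def)
  fix i j :: nat assume "i < 2" "j < 2" "i \<noteq> j"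
  then have "i = 0 \<and> j = 1 \<or> i = 1 \<and> j = 0" by auto
  then show "(if i = 0 then {x} else {y}) \<inter> (if j = 0 then {x} else {y}) = {}"
    and "\<exists>a\<in>if i = 0 then {x} else {y}. \<exists>b\<in>if j = 0 then {x} else {y}. E a b"
    using simple_graphD[OF assms(1)] assms(2) by auto
qed simp

lemma has_complete_minor_induced:
  "has_complete_minor S (induced E S) n \<Longrightarrow> S \<subseteq> V \<Longrightarrow> has_complete_minor V E n"
  by (erule has_complete_minor_mono) (auto simp: induced_def)

lemma has_complete_minor_delete_edge:
  "has_complete_minor V (delete_edge E x y) n \<Longrightarrow> has_complete_minor V E n"
  by (erule has_complete_minor_mono) (auto simp: delete_edge_def)

lemma has_complete_minor_cone:
  assumes G: "simple_graph V E" and "x \<in> V"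
    and "has_complete_minor (neighbours V E x) (induced E (neighbours V E x)) n"
  shows "has_complete_minor V E (Suc n)"
proof -
  let ?N = "neighbours V E x"
  obtain B where B: "\<forall>i<n. B i \<noteq> {} \<and> B i \<subseteq> ?N \<and> connected_set (induced E ?N) (B i)"
    "\<forall>i<n. \<forall>j<n. i \<noteq> j \<longrightarrow> B i \<inter> B j = {} \<and> (\<exists>a\<in>B i. \<exists>b\<in>B j. induced E ?N a b)"
    using assms(3) unfolding has_complete_minor_def by blast
  have "?N \<subseteq> V" and "x \<notin> ?N"
    using simple_graphD[OF G] unfolding neighbours_def by auto
  have conn: "connected_set E (B i)" if "i < n" for i
    using B(1) that by (auto intro: connected_set_mono simp: induced_def)
  have adj: "\<exists>a\<in>B i. E a x" "\<exists>b\<in>B i. E x b" if "i < n" for i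
    using B(1) that simple_graphD(4)[OF G] unfolding neighbours_def by blast+
  show ?thesis
    unfolding has_complete_minor_def
  proof (intro exI[of _ "B(n := {x})"] conjI allI impI)
    fix i assume "i < Suc n"
    then show "(B(n := {x})) i \<noteq> {}" "(B(n := {x})) i \<subseteq> V"
      using B(1) \<open>?N \<subseteq> V\<close> \<open>x \<in> V\<close> by (auto simp: less_Suc_eq)
    show "connected_set E ((B(n := {x})) i)"
      using conn \<open>i < Suc n\<close> by (auto simp: less_Suc_eq connected_set_def)
  next
    fix i j assume "i < Suc n" "j < Suc n" "i \<noteq> j"
    then show "(B(n := {x})) i \<inter> (B(n := {x})) j = {}"
      and "\<exists>a\<in>(B(n := {x})) i. \<exists>b\<in>(B(n := {x})) j. E a b"
      using B adj \<open>x \<notin> ?N\<close> by (auto simp: less_Suc_eq induced_def) blast+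
  qed
qed

lemma connected_set_uncontract:
  assumes G: "simple_graph V E" and "E x y"
    and conn: "connected_set (contract_edge V E x y) B"
  defines "C \<equiv> if x \<in> B then insert y B else B"
  shows "connected_set E C"
proof -
  let ?W = "(induced E C)\<^sup>*\<^sup>*"
  have "B \<subseteq> C" unfolding C_def by auto
  have xy_walk: "?W x y \<and> ?W y x" if "x \<in> B"
    using that \<open>E x y\<close> simple_graphD(4)[OF G] by (auto simp: C_def induced_def)
  have "?W u v" if step: "induced (contract_edge V E x y) B u v" for u v
  proof -
    have uv: "u \<in> C" "v \<in> C" using step \<open>B \<subseteq> C\<close> by (auto simp: induced_def)
    consider "E u v" | "u = x" "E y v" | "v = x" "E u y"
      using step by (auto simp: induced_def contract_edge_def)
    then show ?thesis
    proof cases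
      case 1
      then show ?thesis using uv by (auto simp: induced_def)
    next
      case 2
      then have "induced E C y v" using step uv by (auto simp: C_def induced_def)
      then show ?thesis using 2 xy_walk step by (auto simp: induced_def intro: rtranclp.rtrancl_into_rtrancl)
    next
      case 3
      then have "induced E C u y" using step uv by (auto simp: C_def induced_def)
      then show ?thesis using 3 xy_walk step by (auto simp: induced_def intro: converse_rtranclp_into_rtranclp)
    qed
  qed
  then have "(induced (contract_edge V E x y) B)\<^sup>*\<^sup>* \<le> ?W"
    by (metis predicate2I rtranclp_idemp rtranclp_mono)
  then have walk_B: "?W u v" if "u \<in> B" "v \<in> B" for u v
    using conn that by (auto simp: connected_set_iff_induced)
  show ?thesis
    unfolding connected_set_iff_induced
  proof (intro ballI)
    fix a b assume "a \<in> C" "b \<in> C"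
    show "?W a b"
    proof (cases "x \<in> B")
      case True
      have "?W c x \<and> ?W x c" if "c \<in> C" for c
        using that True walk_B xy_walk by (cases "c = y") (auto simp: C_def)
      then show ?thesis using \<open>a \<in> C\<close> \<open>b \<in> C\<close> by (meson rtranclp_trans)
    next
      case False
      then show ?thesis using \<open>a \<in> C\<close> \<open>b \<in> C\<close> walk_B by (simp add: C_def)
    qed
  qed
qed

lemma has_complete_minor_contract_edge:
  assumes G: "simple_graph V E" and "E x y"
    and "has_complete_minor (V - {y}) (contract_edge V E x y) n"
  shows "has_complete_minor V E n"
proof -
  obtain B where B: "\<forall>i<n. B i \<noteq> {} \<and> B i \<subseteq> V - {y} \<and> connected_set (contract_edge V E x y) (B i)"
    "\<forall>i<n. \<forall>j<n. i \<noteq> j \<longrightarrow> B i \<inter> B j = {} \<and> (\<exists>a\<in>B i. \<exists>b\<in>B j. contract_edge V E x y a b)"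
    using assms(3) unfolding has_complete_minor_def by blast
  define C where "C i = (if x \<in> B i then insert y (B i) else B i)" for i
  have "y \<in> V" using simple_graphD(3)[OF G \<open>E x y\<close>] .
  show ?thesis
    unfolding has_complete_minor_def
  proof (intro exI[of _ C] conjI allI impI)
    fix i assume "i < n"
    then show "C i \<noteq> {}" "C i \<subseteq> V" "connected_set E (C i)"
      using B(1) \<open>y \<in> V\<close> connected_set_uncontract[OF G \<open>E x y\<close>] by (auto simp: C_def)
  next
    fix i j assume "i < n" "j < n" "i \<noteq> j"
    then show "C i \<inter> C j = {}"
      using B(1) B(2)[rule_format, OF \<open>i < n\<close> \<open>j < n\<close> \<open>i \<noteq> j\<close>] by (auto simp: C_def)
    obtain a b where ab: "a \<in> B i" "b \<in> B j" "contract_edge V E x y a b"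
      using B(2) \<open>i < n\<close> \<open>j < n\<close> \<open>i \<noteq> j\<close> by blast
    then consider "E a b" | "a = x" "E y b" | "b = x" "E a y"
      by (auto simp: contract_edge_def)
    then show "\<exists>a\<in>C i. \<exists>b\<in>C j. E a b"
      by cases (use ab in \<open>auto simp: C_def\<close>)
  qed
qed

section \<open>Edge density of graphs without a complete minor\<close>

lemma card_arcs_neighbours_ge:
  assumes G: "simple_graph V E" and "x \<in> V"
    and common: "\<forall>u w. E u w \<longrightarrow> t \<le> card (neighbours V E u \<inter> neighbours V E w)"
  shows "t * card (neighbours V E x) \<le> card (arcs (neighbours V E x) E)"
proof -
  let ?N = "neighbours V E x"
  have H: "simple_graph ?N (induced E ?N)"
    using simple_graph_induced[OF G] by (auto simp: neighbours_def)
  have "t \<le> card (neighbours ?N (induced E ?N) p)" if "p \<in> ?N" for p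
  proof -
    have "neighbours ?N (induced E ?N) p = ?N \<inter> neighbours V E p"
      using neighbours_induced[of ?N V E p] that by (auto simp: neighbours_def)
    moreover have "E x p"
      using that by (simp add: neighbours_def)
    ultimately show ?thesis
      using common by simp
  qed
  then have "(\<Sum>p\<in>?N. t) \<le> (\<Sum>p\<in>?N. card (neighbours ?N (induced E ?N) p))"
    by (intro sum_mono)
  then show ?thesis
    using card_arcs_eq_sum_degrees[OF H] by (simp add: arcs_induced mult.commute)
qed

text \<open>The hypotheses are the properties of a minimal counterexample to the bound for \<open>t\<close>.
  The neighbourhood of a vertex of at most average degree is then too dense for the bound
  for \<open>t - 1\<close>.\<close>

lemma has_complete_minor_if_locally_dense:
  fixes V :: "'a set"
  assumes "1 \<le> t" and "t \<le> 3"
    and bound: "\<And>W :: 'a set. \<And>F. simple_graph W F \<Longrightarrow> \<not> has_complete_minor W F (t + 1)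
      \<Longrightarrow> t - 1 \<le> card W \<Longrightarrow> card (arcs W F) + (t - 1) * t \<le> 2 * (t - 1) * card W"
    and G: "simple_graph V E" and "V \<noteq> {}"
    and degree: "\<forall>v\<in>V. t < card (neighbours V E v)"
    and common: "\<forall>u w. E u w \<longrightarrow> t \<le> card (neighbours V E u \<inter> neighbours V E w)"
    and sparse: "card (arcs V E) + t * (t + 1) \<le> 2 * t * card V + 2"
  shows "has_complete_minor V E (t + 2)"
proof (rule ccontr)
  assume no_minor: "\<not> has_complete_minor V E (t + 2)"
  obtain x where "x \<in> V" and avg: "card (neighbours V E x) * card V \<le> card (arcs V E)"
    using exists_degree_le_average[OF G \<open>V \<noteq> {}\<close>] by blast
  define N where "N = neighbours V E x"
  have "t < card N"
    using degree \<open>x \<in> V\<close> by (simp add: N_def)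
  have H: "simple_graph N (induced E N)"
    using simple_graph_induced[OF G] by (auto simp: N_def neighbours_def)
  have "\<not> has_complete_minor N (induced E N) (t + 1)"
    using has_complete_minor_cone[OF G \<open>x \<in> V\<close>] no_minor unfolding N_def by auto
  then have "card (arcs N E) + (t - 1) * t \<le> 2 * (t - 1) * card N"
    using bound[OF H] \<open>t < card N\<close> by (simp add: arcs_induced)
  moreover have "t * card N \<le> card (arcs N E)"
    using card_arcs_neighbours_ge[OF G \<open>x \<in> V\<close> common] by (simp add: N_def)
  ultimately have count: "t * card N + (t - 1) * t \<le> 2 * (t - 1) * card N"
    by linarith
  \<comment> \<open>For \<open>t < 3\<close> the count is contradictory by itself; for \<open>t = 3\<close> it gives \<open>card N \<ge> 6\<close>, too
    many for a vertex of at most average degree. For \<open>t > 3\<close> the argument breaks down.\<close>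
  have "t = 1 \<or> t = 2 \<or> t = 3"
    using \<open>1 \<le> t\<close> \<open>t \<le> 3\<close> by auto
  then show False
  proof (elim disjE)
    assume "t = 3"
    then have "6 \<le> card N"
      using count by simp
    then have "6 * card V \<le> card N * card V"
      by (rule mult_right_mono) simp
    moreover have "card (arcs V E) + 10 \<le> 6 * card V"
      using sparse \<open>t = 3\<close> by simp
    ultimately show False
      using avg unfolding N_def by linarith
  qed (use count \<open>t < card N\<close> in simp_all)
qed

lemma locally_dense_if_smaller_graphs_sparse:
  fixes V :: "'a set"
  assumes G: "simple_graph V E" and no_minor: "\<not> has_complete_minor V E (t + 2)" and "t < card V"
    and smaller: "\<And>W :: 'a set. \<And>F. card W < card V \<Longrightarrow> simple_graph W F
      \<Longrightarrow> \<not> has_complete_minor W F (t + 2) \<Longrightarrow> t \<le> card W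
      \<Longrightarrow> card (arcs W F) + t * (t + 1) \<le> 2 * t * card W"
    and dense: "2 * t * card V < card (arcs V E) + t * (t + 1)"
  shows "\<forall>v\<in>V. t < card (neighbours V E v)"
    and "\<forall>u w. E u w \<longrightarrow> t \<le> card (neighbours V E u \<inter> neighbours V E w)"
proof -
  show "\<forall>v\<in>V. t < card (neighbours V E v)"
  proof
    fix v assume "v \<in> V"
    let ?V' = "V - {v}"
    have card_V: "card V = card ?V' + 1"
      using card_Suc_Diff1[OF simple_graphD(1)[OF G] \<open>v \<in> V\<close>] by simp
    moreover have "\<not> has_complete_minor ?V' (induced E ?V') (t + 2)"
      using no_minor has_complete_minor_induced[of ?V' E "t + 2" V] by blast
    ultimately have "card (arcs ?V' E) + t * (t + 1) \<le> 2 * t * card ?V'"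
      using smaller[of ?V' "induced E ?V'"] simple_graph_induced[OF G] \<open>t < card V\<close>
      by (simp add: arcs_induced)
    then show "t < card (neighbours V E v)"
      using dense card_arcs_delete_vertex[OF G, of v] card_V by (simp add: algebra_simps)
  qed
  show "\<forall>u w. E u w \<longrightarrow> t \<le> card (neighbours V E u \<inter> neighbours V E w)"
  proof (intro allI impI)
    fix u w assume "E u w"
    let ?V' = "V - {w}"
    have card_V: "card V = card ?V' + 1"
      using card_Suc_Diff1[OF simple_graphD(1)[OF G] simple_graphD(3)[OF G \<open>E u w\<close>]] by simp
    moreover have "\<not> has_complete_minor ?V' (contract_edge V E u w) (t + 2)"
      using no_minor has_complete_minor_contract_edge[OF G \<open>E u w\<close>] by blast
    ultimately have "card (arcs ?V' (contract_edge V E u w)) + t * (t + 1) \<le> 2 * t * card ?V'"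
      using smaller[of ?V' "contract_edge V E u w"] simple_graph_contract_edge[OF G] \<open>t < card V\<close>
      by simp
    then show "t \<le> card (neighbours V E u \<inter> neighbours V E w)"
      using dense card_arcs_contract_edge[OF G \<open>E u w\<close>] card_V by (simp add: algebra_simps)
  qed
qed

lemma card_arcs_bound_if_smaller_graphs_sparse:
  fixes V :: "'a set"
  assumes "1 \<le> t" and "t \<le> 3"
    and bound: "\<And>W :: 'a set. \<And>F. simple_graph W F \<Longrightarrow> \<not> has_complete_minor W F (t + 1)
      \<Longrightarrow> t - 1 \<le> card W \<Longrightarrow> card (arcs W F) + (t - 1) * t \<le> 2 * (t - 1) * card W"
    and smaller: "\<And>W :: 'a set. \<And>F. card W < card V \<Longrightarrow> simple_graph W F
      \<Longrightarrow> \<not> has_complete_minor W F (t + 2) \<Longrightarrow> t \<le> card W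
      \<Longrightarrow> card (arcs W F) + t * (t + 1) \<le> 2 * t * card W"
  shows "simple_graph V E \<Longrightarrow> \<not> has_complete_minor V E (t + 2) \<Longrightarrow> t \<le> card V
    \<Longrightarrow> card (arcs V E) + t * (t + 1) \<le> 2 * t * card V"
proof (induction "card (arcs V E)" arbitrary: E rule: less_induct)
  case less
  note G = less.prems(1) and no_minor = less.prems(2)
  show ?case
  proof (rule ccontr)
    assume dense: "\<not> ?case"
    have "t < card V"
    proof (rule ccontr)
      assume "\<not> t < card V"
      then have "card V = t"
        using \<open>t \<le> card V\<close> by simp
      then show False
        using dense card_arcs_le_square[OF G] by (simp add: algebra_simps) (use le_square[of t] in arith)
    qed
    have "arcs V E \<noteq> {}"
    proof
      assume "arcs V E = {}"
      moreover have "t * (t + 1) \<le> t * card V"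
        using \<open>t < card V\<close> by (intro mult_le_mono2) simp
      ultimately show False
        using dense by simp
    qed
    then obtain x y where "E x y"
      by (auto simp: arcs_def)
    have "card (arcs V E) + t * (t + 1) \<le> 2 * t * card V + 2"
    proof (rule ccontr)
      assume too_dense: "\<not> ?thesis"
      have "\<not> has_complete_minor V (delete_edge E x y) (t + 2)"
        using no_minor has_complete_minor_delete_edge[of V E x y "t + 2"] by blast
      then have "card (arcs V (delete_edge E x y)) + t * (t + 1) \<le> 2 * t * card V"
        using less.hyps[of "delete_edge E x y"] simple_graph_delete_edge[OF G]
          card_arcs_delete_edge[OF G \<open>E x y\<close>] \<open>t \<le> card V\<close> by simp
      then show False
        using too_dense card_arcs_delete_edge[OF G \<open>E x y\<close>] by simp
    qed
    moreover have "V \<noteq> {}"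
      using \<open>t < card V\<close> by auto
    moreover have "2 * t * card V < card (arcs V E) + t * (t + 1)"
      using dense by simp
    note locally_dense = locally_dense_if_smaller_graphs_sparse[OF G no_minor \<open>t < card V\<close> smaller this]
    ultimately have "has_complete_minor V E (t + 2)"
      using has_complete_minor_if_locally_dense[OF \<open>1 \<le> t\<close> \<open>t \<le> 3\<close> bound G] locally_dense
      by blast
    then show False
      using no_minor by contradiction
  qed
qed

lemma card_arcs_bound_step:
  fixes V :: "'a set"
  assumes "1 \<le> t" and "t \<le> 3"
    and bound: "\<And>W :: 'a set. \<And>F. simple_graph W F \<Longrightarrow> \<not> has_complete_minor W F (t + 1)
      \<Longrightarrow> t - 1 \<le> card W \<Longrightarrow> card (arcs W F) + (t - 1) * t \<le> 2 * (t - 1) * card W"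
  shows "simple_graph V E \<Longrightarrow> \<not> has_complete_minor V E (t + 2) \<Longrightarrow> t \<le> card V
    \<Longrightarrow> card (arcs V E) + t * (t + 1) \<le> 2 * t * card V"
proof (induction "card V" arbitrary: V E rule: less_induct)
  case less
  then show ?case
    using card_arcs_bound_if_smaller_graphs_sparse[OF \<open>1 \<le> t\<close> \<open>t \<le> 3\<close> bound less.hyps]
    by blast
qed

theorem card_arcs_le_if_no_complete_minor:
  fixes V :: "'a set"
  assumes "t \<le> 3" and "simple_graph V E" and "\<not> has_complete_minor V E (t + 2)" and "t \<le> card V"
  shows "card (arcs V E) + t * (t + 1) \<le> 2 * t * card V"
  using assms
proof (induction t arbitrary: V E)
  case 0
  then have "\<not> E x y" for x y
    using has_complete_minor_2[OF "0.prems"(2)] "0.prems"(3) by (metis add_0)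
  then show ?case
    by (simp add: arcs_def)
next
  case (Suc t)
  have bound: "card (arcs W F) + (Suc t - 1) * Suc t \<le> 2 * (Suc t - 1) * card W"
    if "simple_graph W F" "\<not> has_complete_minor W F (Suc t + 1)" "Suc t - 1 \<le> card W"
    for W :: "'a set" and F
    using Suc.IH[of W F] that Suc.prems(1) by (simp add: algebra_simps)
  show ?case
    using card_arcs_bound_step[of "Suc t", OF _ _ bound] Suc.prems by simp
qed

section \<open>Orientations of bounded out-degree\<close>

definition is_orientation :: "('a \<Rightarrow> 'a \<Rightarrow> bool) \<Rightarrow> ('a \<Rightarrow> 'a \<Rightarrow> bool) \<Rightarrow> bool" where
  "is_orientation E D \<longleftrightarrow>
     (\<forall>u v. D u v \<longrightarrow> E u v) \<and> (\<forall>u v. E u v \<longrightarrow> D u v \<or> D v u) \<and> (\<forall>u v. D u v \<longrightarrow> \<not> D v u)"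

abbreviation out_degree :: "('a \<Rightarrow> 'a \<Rightarrow> bool) \<Rightarrow> 'a \<Rightarrow> nat" where
  "out_degree D v \<equiv> card {w. D v w}"

lemma finite_out_neighbours:
  assumes "simple_graph V E" and "is_orientation E D"
  shows "finite {w. D v w}"
proof -
  have "{w. D v w} \<subseteq> V"
    using assms(2) simple_graphD(3)[OF assms(1)] unfolding is_orientation_def by blast
  then show ?thesis
    using simple_graphD(1)[OF assms(1)] by (rule finite_subset)
qed

lemma is_orientation_reverse_arc:
  assumes G: "simple_graph V E" and D: "is_orientation E D" and "D a b"
    and D'_def: "D' = (\<lambda>u v. (D u v \<and> (u, v) \<noteq> (a, b)) \<or> (u, v) = (b, a))"
  shows "is_orientation E D'"
    and "out_degree D' a + 1 = out_degree D a"
    and "out_degree D' b = out_degree D b + 1"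
    and "\<And>v. v \<noteq> a \<Longrightarrow> v \<noteq> b \<Longrightarrow> {w. D' v w} = {w. D v w}"
proof -
  have "\<not> D b a" and "a \<noteq> b"
    using D \<open>D a b\<close> by (auto simp: is_orientation_def)
  then show "is_orientation E D'"
    using D \<open>D a b\<close> simple_graphD(4)[OF G] unfolding is_orientation_def D'_def by blast
  have "{w. D' a w} = {w. D a w} - {b}" and "{w. D' b w} = insert a {w. D b w}"
    using \<open>a \<noteq> b\<close> unfolding D'_def by auto
  then show "out_degree D' a + 1 = out_degree D a" and "out_degree D' b = out_degree D b + 1"
    using finite_out_neighbours[OF G D] card_Suc_Diff1[of "{w. D a w}" b] \<open>D a b\<close> \<open>\<not> D b a\<close>
    by simp_all
  show "\<And>v. v \<noteq> a \<Longrightarrow> v \<noteq> b \<Longrightarrow> {w. D' v w} = {w. D v w}"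
    unfolding D'_def by auto
qed

lemma rtrancl_path_mono_on:
  assumes "rtrancl_path R x xs y" and "\<And>a b. a \<in> set (x # xs) \<Longrightarrow> R a b \<Longrightarrow> S a b"
  shows "rtrancl_path S x xs y"
  using assms by (induction rule: rtrancl_path.induct) (auto intro: rtrancl_path.intros)

lemma is_orientation_reverse_path:
  assumes G: "simple_graph V E" and "is_orientation E D"
    and "rtrancl_path D x xs w" and "distinct (x # xs)" and "x \<noteq> w"
  shows "\<exists>D'. is_orientation E D' \<and> out_degree D' x + 1 = out_degree D x
    \<and> out_degree D' w = out_degree D w + 1
    \<and> (\<forall>v. v \<noteq> x \<longrightarrow> v \<noteq> w \<longrightarrow> out_degree D' v = out_degree D v)"
  using assms(2-)
proof (induction xs arbitrary: x D)
  case Nil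
  then show ?case by (auto elim: rtrancl_path.cases)
next
  case (Cons b rest)
  have "D x b" and path: "rtrancl_path D b rest w"
    using Cons.prems(2) by (auto elim: rtrancl_path.cases)
  define D1 where "D1 = (\<lambda>u v. (D u v \<and> (u, v) \<noteq> (x, b)) \<or> (u, v) = (b, x))"
  note D1 = is_orientation_reverse_arc[OF G Cons.prems(1) \<open>D x b\<close> D1_def]
  show ?case
  proof (cases "b = w")
    case True
    then show ?thesis
      using D1 by (intro exI[of _ D1]) auto
  next
    case False
    have "rtrancl_path D1 b rest w"
      using path by (rule rtrancl_path_mono_on) (use Cons.prems(3) in \<open>auto simp: D1_def\<close>)
    then obtain D' where D': "is_orientation E D'" "out_degree D' b + 1 = out_degree D1 b"
      "out_degree D' w = out_degree D1 w + 1"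
      "\<forall>v. v \<noteq> b \<longrightarrow> v \<noteq> w \<longrightarrow> out_degree D' v = out_degree D1 v"
      using Cons.IH[OF D1(1)] Cons.prems(3) False by auto
    have "x \<noteq> b"
      using Cons.prems(3) by auto
    show ?thesis
    proof (intro exI[of _ D'] conjI allI impI)
      show "is_orientation E D'"
        by (rule D'(1))
      show "out_degree D' x + 1 = out_degree D x"
        using D'(4) D1(2) \<open>x \<noteq> b\<close> \<open>x \<noteq> w\<close> by simp
      show "out_degree D' w = out_degree D w + 1"
        using D'(3) D1(4)[of w] \<open>x \<noteq> w\<close> \<open>b \<noteq> w\<close> by simp
      fix v assume "v \<noteq> x" "v \<noteq> w"
      then show "out_degree D' v = out_degree D v"
        using D'(2,4) D1(3) D1(4)[of v] by (cases "v = b") simp_all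
    qed
  qed
qed

lemma is_orientation_add_edge:
  assumes G: "simple_graph V E" and "E x y" and D: "is_orientation (delete_edge E x y) D"
    and D'_def: "D' = (\<lambda>u v. D u v \<or> (u, v) = (x, y))"
  shows "is_orientation E D'"
    and "out_degree D' x = out_degree D x + 1"
    and "\<And>v. v \<noteq> x \<Longrightarrow> {w. D' v w} = {w. D v w}"
proof -
  have "\<not> D x y" and "\<not> D y x"
    using D by (auto simp: is_orientation_def delete_edge_def)
  then show "is_orientation E D'"
    using D \<open>E x y\<close> simple_graphD(5)[OF G]
    unfolding is_orientation_def delete_edge_def D'_def by blast
  have "{w. D' x w} = insert y {w. D x w}"
    unfolding D'_def by auto
  moreover have "finite {w. D x w}"
    using finite_out_neighbours[OF simple_graph_delete_edge[OF G] D] .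
  ultimately show "out_degree D' x = out_degree D x + 1"
    using \<open>\<not> D x y\<close> by simp
  show "\<And>v. v \<noteq> x \<Longrightarrow> {w. D' v w} = {w. D v w}"
    unfolding D'_def by auto
qed

lemma sum_out_degree_le_card_arcs:
  assumes G: "simple_graph V E" and D: "is_orientation E D" and "R \<subseteq> V"
    and closed: "\<And>u w. u \<in> R \<Longrightarrow> D u w \<Longrightarrow> w \<in> R"
  shows "2 * (\<Sum>v\<in>R. out_degree D v) \<le> card (arcs R E)"
proof -
  define A where "A = Sigma R (\<lambda>v. {w. D v w})"
  have "A \<subseteq> arcs R E" and "prod.swap ` A \<subseteq> arcs R E"
    using D closed simple_graphD(4)[OF G] by (auto simp: A_def arcs_def is_orientation_def)
  moreover have "A \<inter> prod.swap ` A = {}"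
    using D by (auto simp: A_def is_orientation_def)
  moreover have "finite A"
    using \<open>A \<subseteq> arcs R E\<close> finite_arcs[OF G] by (rule finite_subset)
  ultimately have "card A + card (prod.swap ` A) \<le> card (arcs R E)"
    by (metis card_Un_disjoint card_mono finite_arcs[OF G] finite_imageI Un_least)
  moreover have "card (prod.swap ` A) = card A"
    by (rule card_image) simp
  moreover have "card A = (\<Sum>v\<in>R. out_degree D v)"
    using finite_subset[OF \<open>R \<subseteq> V\<close> simple_graphD(1)[OF G]] finite_out_neighbours[OF G D]
    unfolding A_def by simp
  ultimately show ?thesis by simp
qed

text \<open>Otherwise the set of vertices reachable from \<open>x\<close> is closed under out-arcs and has
  total out-degree above \<open>k\<close> times its size, so it spans too many edges.\<close>

lemma exists_reachable_out_degree_less: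
  assumes G: "simple_graph V E" and D: "is_orientation E D"
    and sparse: "\<forall>S\<subseteq>V. card (arcs S E) \<le> 2 * k * card S"
    and "x \<in> V" and "k < out_degree D x"
  shows "\<exists>w. D\<^sup>*\<^sup>* x w \<and> out_degree D w < k"
proof (rule ccontr)
  assume no_small: "\<not> ?thesis"
  define R where "R = {w. D\<^sup>*\<^sup>* x w}"
  have "R \<subseteq> V"
  proof
    fix w assume "w \<in> R"
    then have "D\<^sup>*\<^sup>* x w" by (simp add: R_def)
    then show "w \<in> V"
      using \<open>x \<in> V\<close> D simple_graphD(3)[OF G]
      by (induction rule: rtranclp_induct) (auto simp: is_orientation_def)
  qed
  have closed: "\<And>u w. u \<in> R \<Longrightarrow> D u w \<Longrightarrow> w \<in> R"
    unfolding R_def by (simp add: rtranclp.rtrancl_into_rtrancl)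
  have "finite R"
    using \<open>R \<subseteq> V\<close> simple_graphD(1)[OF G] by (rule finite_subset)
  have "(\<Sum>v\<in>R. k + (if v = x then 1 else 0)) \<le> (\<Sum>v\<in>R. out_degree D v)"
    using no_small \<open>k < out_degree D x\<close> by (intro sum_mono) (auto simp: R_def)
  moreover have "x \<in> R" by (simp add: R_def)
  ultimately have "k * card R + 1 \<le> (\<Sum>v\<in>R. out_degree D v)"
    using \<open>finite R\<close> by (simp add: sum.distrib mult.commute)
  moreover have "card (arcs R E) \<le> 2 * k * card R"
    using sparse \<open>R \<subseteq> V\<close> by blast
  moreover have "2 * (\<Sum>v\<in>R. out_degree D v) \<le> card (arcs R E)"
    using G D \<open>R \<subseteq> V\<close> closed by (rule sum_out_degree_le_card_arcs)
  ultimately show False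
    by linarith
qed

lemma exists_orientation_out_degree_le_add_edge:
  assumes G: "simple_graph V E" and sparse: "\<forall>S\<subseteq>V. card (arcs S E) \<le> 2 * k * card S"
    and "E x y" and D: "is_orientation (delete_edge E x y) D" and out_D: "\<forall>v. out_degree D v \<le> k"
  shows "\<exists>D'. is_orientation E D' \<and> (\<forall>v. out_degree D' v \<le> k)"
proof -
  define D1 where "D1 = (\<lambda>u v. D u v \<or> (u, v) = (x, y))"
  note D1 = is_orientation_add_edge[OF G \<open>E x y\<close> D D1_def]
  show ?thesis
  proof (cases "out_degree D1 x \<le> k")
    case True
    show ?thesis
    proof (intro exI[of _ D1] conjI allI)
      fix v
      show "out_degree D1 v \<le> k"
        using True D1(3)[of v] out_D by (cases "v = x") simp_all
    qed (rule D1(1))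
  next
    case False
    then have "out_degree D1 x = k + 1"
      using D1(2) out_D[rule_format, of x] by linarith
    moreover have "x \<in> V"
      using simple_graphD(2)[OF G \<open>E x y\<close>] .
    ultimately obtain w where "D1\<^sup>*\<^sup>* x w" and "out_degree D1 w < k"
      using exists_reachable_out_degree_less[OF G D1(1) sparse, of x] by auto
    then have "x \<noteq> w"
      using \<open>out_degree D1 x = k + 1\<close> by auto
    obtain xs where "rtrancl_path D1 x xs w" and "distinct (x # xs)"
      using \<open>D1\<^sup>*\<^sup>* x w\<close> rtrancl_path_distinct unfolding rtranclp_eq_rtrancl_path by metis
    then obtain D2 where D2: "is_orientation E D2" "out_degree D2 x + 1 = out_degree D1 x"
      "out_degree D2 w = out_degree D1 w + 1"
      "\<forall>v. v \<noteq> x \<longrightarrow> v \<noteq> w \<longrightarrow> out_degree D2 v = out_degree D1 v"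
      using is_orientation_reverse_path[OF G D1(1)] \<open>x \<noteq> w\<close> by blast
    have "out_degree D2 v \<le> k" for v
    proof (cases "v = x \<or> v = w")
      case True
      then show ?thesis
        using D2(2,3) \<open>out_degree D1 x = k + 1\<close> \<open>out_degree D1 w < k\<close> by auto
    next
      case False
      then show ?thesis
        using D2(4) D1(3)[of v] out_D by auto
    qed
    then show ?thesis
      using D2(1) by blast
  qed
qed

theorem exists_orientation_out_degree_le:
  assumes "simple_graph V E" and "\<forall>S\<subseteq>V. card (arcs S E) \<le> 2 * k * card S"
  shows "\<exists>D. is_orientation E D \<and> (\<forall>v. out_degree D v \<le> k)"
  using assms
proof (induction "card (arcs V E)" arbitrary: E rule: less_induct)
  case less
  note G = less.prems(1) and sparse = less.prems(2)
  show ?case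
  proof (cases "\<exists>x y. E x y")
    case False
    then show ?thesis
      by (intro exI[of _ "\<lambda>_ _. False"]) (simp add: is_orientation_def)
  next
    case True
    then obtain x y where "E x y" by blast
    have sparse': "\<forall>S\<subseteq>V. card (arcs S (delete_edge E x y)) \<le> 2 * k * card S"
    proof (intro allI impI)
      fix S assume "S \<subseteq> V"
      have "card (arcs S (delete_edge E x y)) \<le> card (arcs S E)"
        by (rule card_mono[OF finite_arcs[OF G]]) (auto simp: arcs_def delete_edge_def)
      then show "card (arcs S (delete_edge E x y)) \<le> 2 * k * card S"
        using sparse[rule_format, OF \<open>S \<subseteq> V\<close>] by linarith
    qed
    have "card (arcs V (delete_edge E x y)) < card (arcs V E)"
      using card_arcs_delete_edge[OF G \<open>E x y\<close>] by simp
    then obtain D where "is_orientation (delete_edge E x y) D" and "\<forall>v. out_degree D v \<le> k"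
      using less.hyps[OF _ simple_graph_delete_edge[OF G] sparse'] by blast
    then show ?thesis
      using exists_orientation_out_degree_le_add_edge[OF G sparse \<open>E x y\<close>] by blast
  qed
qed

section \<open>List colouring\<close>

lemma card_shared_colours_le:
  assumes G: "simple_graph V E" and D: "is_orientation E D"
    and L: "kd_list_assignment V E k d L" and "v \<in> V"
  shows "card (\<Union>w\<in>{w. D v w}. L v \<inter> L w) \<le> d * out_degree D v"
proof -
  have "card (L v \<inter> L w) \<le> d" if "D v w" for w
  proof -
    have "E v w"
      using D \<open>D v w\<close> by (simp add: is_orientation_def)
    then show ?thesis
      using L \<open>v \<in> V\<close> simple_graphD(3)[OF G] by (simp add: kd_list_assignment_def)
  qed
  then have "(\<Sum>w\<in>{w. D v w}. card (L v \<inter> L w)) \<le> (\<Sum>w\<in>{w. D v w}. d)"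
    by (intro sum_mono) simp
  moreover have "card (\<Union>w\<in>{w. D v w}. L v \<inter> L w) \<le> (\<Sum>w\<in>{w. D v w}. card (L v \<inter> L w))"
    by (rule card_UN_le[OF finite_out_neighbours[OF G D]])
  ultimately show ?thesis
    by (simp add: mult.commute)
qed

lemma exists_proper_L_colouring_if_out_degree_less:
  assumes G: "simple_graph V E" and D: "is_orientation E D"
    and L: "kd_list_assignment V E k d L" and out: "\<forall>v\<in>V. d * out_degree D v < k"
  shows "\<exists>\<phi>. proper_L_colouring V E L \<phi>"
proof -
  define F where "F v = (\<Union>w\<in>{w. D v w}. L v \<inter> L w)" for v
  have "L v - F v \<noteq> {}" if "v \<in> V" for v
  proof -
    have "card (F v) \<le> d * out_degree D v"
      unfolding F_def using G D L \<open>v \<in> V\<close> by (rule card_shared_colours_le)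
    moreover have "k \<le> card (L v)"
      using L \<open>v \<in> V\<close> by (simp add: kd_list_assignment_def)
    ultimately have "card (F v) < card (L v)"
      using out \<open>v \<in> V\<close> by fastforce
    moreover have "F v \<subseteq> L v"
      by (auto simp: F_def)
    ultimately show ?thesis
      by auto
  qed
  then have colour: "(SOME c. c \<in> L v - F v) \<in> L v - F v" if "v \<in> V" for v
    using that by (meson ex_in_conv someI_ex)
  have "proper_L_colouring V E L (\<lambda>v. SOME c. c \<in> L v - F v)"
    unfolding proper_L_colouring_def
  proof (intro conjI ballI impI)
    fix u v assume "u \<in> V" "v \<in> V" "E u v"
    then have "D u v \<or> D v u"
      using D by (auto simp: is_orientation_def)
    then show "(SOME c. c \<in> L u - F u) \<noteq> (SOME c. c \<in> L v - F v)"
      using colour[OF \<open>u \<in> V\<close>] colour[OF \<open>v \<in> V\<close>] by (auto simp: F_def)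
  qed (use colour in blast)
  then show ?thesis by blast
qed

lemma card_arcs_le_if_no_K5_minor:
  assumes G: "simple_graph V E" and "\<not> has_complete_minor V E 5" and "S \<subseteq> V"
  shows "card (arcs S E) \<le> 6 * card S"
proof (cases "3 \<le> card S")
  case True
  have "\<not> has_complete_minor S (induced E S) (3 + 2)"
    using assms(2) has_complete_minor_induced[OF _ \<open>S \<subseteq> V\<close>] by auto
  then show ?thesis
    using card_arcs_le_if_no_complete_minor[of 3 S "induced E S"]
      simple_graph_induced[OF G \<open>S \<subseteq> V\<close>] True
    by (simp add: arcs_induced)
next
  case False
  then have "card S * (card S - 1) \<le> card S * 6"
    by (intro mult_le_mono2) simp
  moreover have "card (arcs S E) \<le> card S * (card S - 1)"
    using card_arcs_le_square[OF simple_graph_induced[OF G \<open>S \<subseteq> V\<close>]]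
    by (simp only: arcs_induced)
  ultimately show ?thesis
    by linarith
qed

theorem corollary2:
  fixes V :: "'a set" and E :: "'a \<Rightarrow> 'a \<Rightarrow> bool"
  assumes "simple_graph V E"
    and "\<not> has_complete_minor V E 5"
  shows "kd_choosable V E 4 1 TYPE('c)"
proof -
  have "\<forall>S\<subseteq>V. card (arcs S E) \<le> 2 * 3 * card S"
    using card_arcs_le_if_no_K5_minor[OF assms] by simp
  then obtain D where D: "is_orientation E D" and out: "\<forall>v. out_degree D v \<le> 3"
    using exists_orientation_out_degree_le[OF assms(1)] by blast
  have "1 * out_degree D v < 4" for v
    using out[rule_format, of v] by simp
  then show ?thesis
    unfolding kd_choosable_def
    using exists_proper_L_colouring_if_out_degree_less[OF assms(1) D, where k = 4 and d = 1] by blast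
qed

end
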